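(* Let $A$, $B$, $C$ be payoff Conway games and let $\sigma$ be a winning strategy on $A^*\otimes B$ and $\tau$ a winning strategy on $B^*\otimes C$. Then the composite strategy $\sigma;\tau$ on $A^*\otimes C$ is also winning.
   Context: A Conway game $A=(V_A,E_A,\lambda_A)$ is a rooted directed graph $(V_A,E_A)$ with root $\star_A$ together with a polarity map $\lambda_A:E_A\to\{-1,+1\}$ on moves ($-1$ = Opponent, $+1$ = Player). A path is a finite sequence of consecutive moves $x_0\to x_1\to\cdots\to x_k$, written $s:x_0\twoheadrightarrow x_k$; $\epsilon_x:x\twoheadrightarrow x$ is the empty path at $x$; $s;t$ denotes concatenation; $\mathrm{Path}_A$ is the set of paths. A play is a path starting at $\star_A$; it is alternating if consecutive moves have opposite polarities. A strategy $\sigma$ on $A$ is a set of alternating plays of even length that contains the empty play, whose nonempty plays start with an Opponent move, which is closed under even-length prefixes ($s\cdot m\cdot n\in\sigma\Rightarrow s\in\sigma$), and which is deterministic ($s\cdot m\cdot n\in\sigma$ and $s\cdot m\cdot n'\in\sigma$ imply $n=n'$). A payoff Conway game is a Conway game together with a payoff $\kappa_A=(\kappa_A^+,\kappa_A^-):\mathrm{Path}_A\to\mathbb{N}\times\mathbb{N}$ satisfying: (compatibility) for every move $m$, $\lambda_A(m)=-1\Rightarrow\kappa_A^+(m)=0$ and $\lambda_A(m)=+1\Rightarrow\kappa_A^-(m)=0$; (suffix domination) $\kappa_A(t)\le\kappa_A(s;t)$ for $s:x\twoheadrightarrow y$, $t:y\twoheadrightarrow z$; (subadditivity) $\kappa_A(s;t)\le\kappa_A(s)+\kappa_A(t)$;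 (norm) $\kappa_A(\epsilon_x)=(0,0)$; here $\le$ and $+$ on $\mathbb{N}\times\mathbb{N}$ are componentwise. Dual: $A^*=(V_A,E_A,-\lambda_A,(\kappa_A^-,\kappa_A^+))$. Tensor $A\otimes B$: positions $V_A\times V_B$ with root $(\star_A,\star_B)$; moves $(x,y)\to(x',y)$ for $(x,x')\in E_A$ and $(x,y)\to(x,y')$ for $(y,y')\in E_B$, with the polarity of the underlying move; payoff $\kappa_{A\otimes B}(s)=\kappa_A(s_{|A})+\kappa_B(s_{|B})$, where $s_{|A}$, $s_{|B}$ are the projections of $s$. A strategy $\sigma$ plays a path $t:x\twoheadrightarrow y$ if there is a play $s:\star\twoheadrightarrow x$ in $\sigma$ with $s;t\in\sigma$. A strategy is winning if every path $s$ it plays satisfies $\kappa^+(s)=0\Rightarrow\kappa^-(s)=0$. Composition: an interaction $u\in int(A,B,C)$ is a sequence of moves of $A$, $B$, $C$ whose projections on $A^*\otimes B$, $B^*\otimes C$ and $A^*\otimes C$ are plays; for $\sigma$ on $A^*\otimes B$ and $\tau$ on $B^*\otimes C$, $\sigma;\tau=\{u_{|A,C}\mid u\in int(A,B,C),\ u_{|A,B}\in\sigma,\ u_{|B,C}\in\tau\}$. *)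

theory Defs
  imports Main
begin

text \<open>Positions of type 'v, moves of type 'm; each move has a
source and a target position (a rooted directed graph whose edges are the moves),
a polarity (-1 Opponent, +1 Player) and the two payoff components on paths
(paths are represented as lists of consecutive moves; the empty list is the empty path).\<close>

record ('v, 'm) pgame =
  pos  :: "'v set"
  mv   :: "'m set"
  src  :: "'m \<Rightarrow> 'v"
  tgt  :: "'m \<Rightarrow> 'v"
  root :: 'v
  pol  :: "'m \<Rightarrow> int"
  payp :: "'m list \<Rightarrow> nat"
  paym :: "'m list \<Rightarrow> nat"

fun is_chain :: "('v, 'm, 'z) pgame_scheme \<Rightarrow> 'm list \<Rightarrow> bool" where
  "is_chain G [] = True"
| "is_chain G [m] = True"
| "is_chain G (m # n # r) = (tgt G m = src G n \<and> is_chain G (n # r))"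

definition is_path :: "('v, 'm, 'z) pgame_scheme \<Rightarrow> 'm list \<Rightarrow> bool" where
  "is_path G s \<longleftrightarrow> set s \<subseteq> mv G \<and> is_chain G s"

definition is_play :: "('v, 'm, 'z) pgame_scheme \<Rightarrow> 'm list \<Rightarrow> bool" where
  "is_play G s \<longleftrightarrow> is_path G s \<and> (s \<noteq> [] \<longrightarrow> src G (hd s) = root G)"

definition alternating :: "('v, 'm, 'z) pgame_scheme \<Rightarrow> 'm list \<Rightarrow> bool" where
  "alternating G s \<longleftrightarrow> (\<forall>i. Suc i < length s \<longrightarrow> pol G (s ! Suc i) = - pol G (s ! i))"

definition conway_game :: "('v, 'm, 'z) pgame_scheme \<Rightarrow> bool" where
  "conway_game G \<longleftrightarrow> root G \<in> pos G
     \<and> (\<forall>m\<in>mv G. src G m \<in> pos G \<and> tgt G m \<in> pos G \<and> pol G m \<in> {-1, 1})"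

definition payoff_game :: "('v, 'm, 'z) pgame_scheme \<Rightarrow> bool" where
  "payoff_game G \<longleftrightarrow> conway_game G
     \<and> (\<forall>m\<in>mv G. (pol G m = -1 \<longrightarrow> payp G [m] = 0) \<and> (pol G m = 1 \<longrightarrow> paym G [m] = 0))
     \<and> (\<forall>s t. is_path G (s @ t) \<longrightarrow> payp G t \<le> payp G (s @ t) \<and> paym G t \<le> paym G (s @ t))
     \<and> (\<forall>s t. is_path G (s @ t) \<longrightarrow>
            payp G (s @ t) \<le> payp G s + payp G t \<and> paym G (s @ t) \<le> paym G s + paym G t)
     \<and> payp G [] = 0 \<and> paym G [] = 0"

definition dual :: "('v, 'm) pgame \<Rightarrow> ('v, 'm) pgame" where
  "dual G = G\<lparr> pol := (\<lambda>m. - pol G m), payp := paym G, paym := payp G \<rparr>"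

text \<open>Tensor product: a move of A at B-position y is Inl (m, y); a move of B at A-position x
is Inr (x, n).\<close>

fun projL :: "(('ma \<times> 'vb) + ('va \<times> 'mb)) list \<Rightarrow> 'ma list" where
  "projL [] = []"
| "projL (Inl (m, y) # r) = m # projL r"
| "projL (Inr _ # r) = projL r"

fun projR :: "(('ma \<times> 'vb) + ('va \<times> 'mb)) list \<Rightarrow> 'mb list" where
  "projR [] = []"
| "projR (Inl _ # r) = projR r"
| "projR (Inr (x, n) # r) = n # projR r"

definition tensor :: "('va, 'ma) pgame \<Rightarrow> ('vb, 'mb) pgame
    \<Rightarrow> ('va \<times> 'vb, ('ma \<times> 'vb) + ('va \<times> 'mb)) pgame" where
  "tensor A B = \<lparr>
     pos = pos A \<times> pos B,
     mv = {Inl (m, y) | m y. m \<in> mv A \<and> y \<in> pos B} \<union> {Inr (x, n) | x n. x \<in> pos A \<and> n \<in> mv B},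
     src = (\<lambda>e. case e of Inl (m, y) \<Rightarrow> (src A m, y) | Inr (x, n) \<Rightarrow> (x, src B n)),
     tgt = (\<lambda>e. case e of Inl (m, y) \<Rightarrow> (tgt A m, y) | Inr (x, n) \<Rightarrow> (x, tgt B n)),
     root = (root A, root B),
     pol = (\<lambda>e. case e of Inl (m, y) \<Rightarrow> pol A m | Inr (x, n) \<Rightarrow> pol B n),
     payp = (\<lambda>s. payp A (projL s) + payp B (projR s)),
     paym = (\<lambda>s. paym A (projL s) + paym B (projR s)) \<rparr>"

definition strategy :: "('v, 'm, 'z) pgame_scheme \<Rightarrow> 'm list set \<Rightarrow> bool" where
  "strategy G \<sigma> \<longleftrightarrow>
     (\<forall>s\<in>\<sigma>. is_play G s \<and> alternating G s \<and> even (length s))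
     \<and> [] \<in> \<sigma>
     \<and> (\<forall>s\<in>\<sigma>. s \<noteq> [] \<longrightarrow> pol G (hd s) = -1)
     \<and> (\<forall>s m n. s @ [m, n] \<in> \<sigma> \<longrightarrow> s \<in> \<sigma>)
     \<and> (\<forall>s m n n'. s @ [m, n] \<in> \<sigma> \<and> s @ [m, n'] \<in> \<sigma> \<longrightarrow> n = n')"

definition plays :: "'m list set \<Rightarrow> 'm list \<Rightarrow> bool" where
  "plays \<sigma> t \<longleftrightarrow> (\<exists>s. s \<in> \<sigma> \<and> s @ t \<in> \<sigma>)"

definition winning :: "('v, 'm, 'z) pgame_scheme \<Rightarrow> 'm list set \<Rightarrow> bool" where
  "winning G \<sigma> \<longleftrightarrow> (\<forall>t. plays \<sigma> t \<longrightarrow> (payp G t = 0 \<longrightarrow> paym G t = 0))"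

text \<open>Turning a sequence of moves of two games into a sequence of moves of the tensor
game, by tracking the current position of each component starting from (x, y).\<close>
fun lift :: "('ma \<Rightarrow> 'va) \<Rightarrow> ('mb \<Rightarrow> 'vb) \<Rightarrow> 'va \<Rightarrow> 'vb \<Rightarrow> ('ma + 'mb) list
             \<Rightarrow> (('ma \<times> 'vb) + ('va \<times> 'mb)) list" where
  "lift ta tb x y [] = []"
| "lift ta tb x y (Inl m # r) = Inl (m, y) # lift ta tb (ta m) y r"
| "lift ta tb x y (Inr n # r) = Inr (x, n) # lift ta tb x (tb n) r"

definition restrAB :: "('ma + 'mb + 'mc) list \<Rightarrow> ('ma + 'mb) list" where
  "restrAB u = concat (map (\<lambda>e. case e of Inl a \<Rightarrow> [Inl a] | Inr (Inl b) \<Rightarrow> [Inr b] | Inr (Inr c) \<Rightarrow> []) u)"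

definition restrBC :: "('ma + 'mb + 'mc) list \<Rightarrow> ('mb + 'mc) list" where
  "restrBC u = concat (map (\<lambda>e. case e of Inl a \<Rightarrow> [] | Inr (Inl b) \<Rightarrow> [Inl b] | Inr (Inr c) \<Rightarrow> [Inr c]) u)"

definition restrAC :: "('ma + 'mb + 'mc) list \<Rightarrow> ('ma + 'mc) list" where
  "restrAC u = concat (map (\<lambda>e. case e of Inl a \<Rightarrow> [Inl a] | Inr (Inl b) \<Rightarrow> [] | Inr (Inr c) \<Rightarrow> [Inr c]) u)"

definition uAB :: "('va, 'ma) pgame \<Rightarrow> ('vb, 'mb) pgame \<Rightarrow> ('ma + 'mb + 'mc) list
    \<Rightarrow> (('ma \<times> 'vb) + ('va \<times> 'mb)) list" where
  "uAB A B u = lift (tgt A) (tgt B) (root A) (root B) (restrAB u)"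

definition uBC :: "('vb, 'mb) pgame \<Rightarrow> ('vc, 'mc) pgame \<Rightarrow> ('ma + 'mb + 'mc) list
    \<Rightarrow> (('mb \<times> 'vc) + ('vb \<times> 'mc)) list" where
  "uBC B C u = lift (tgt B) (tgt C) (root B) (root C) (restrBC u)"

definition uAC :: "('va, 'ma) pgame \<Rightarrow> ('vc, 'mc) pgame \<Rightarrow> ('ma + 'mb + 'mc) list
    \<Rightarrow> (('ma \<times> 'vc) + ('va \<times> 'mc)) list" where
  "uAC A C u = lift (tgt A) (tgt C) (root A) (root C) (restrAC u)"

definition interaction :: "('va, 'ma) pgame \<Rightarrow> ('vb, 'mb) pgame \<Rightarrow> ('vc, 'mc) pgame
    \<Rightarrow> ('ma + 'mb + 'mc) list \<Rightarrow> bool" where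
  "interaction A B C u \<longleftrightarrow>
     is_play (tensor (dual A) B) (uAB A B u)
     \<and> is_play (tensor (dual B) C) (uBC B C u)
     \<and> is_play (tensor (dual A) C) (uAC A C u)"

definition comp :: "('va, 'ma) pgame \<Rightarrow> ('vb, 'mb) pgame \<Rightarrow> ('vc, 'mc) pgame
    \<Rightarrow> (('ma \<times> 'vb) + ('va \<times> 'mb)) list set \<Rightarrow> (('mb \<times> 'vc) + ('vb \<times> 'mc)) list set
    \<Rightarrow> (('ma \<times> 'vc) + ('va \<times> 'mc)) list set" where
  "comp A B C \<sigma> \<tau> = {uAC A C u | u. interaction A B C u \<and> uAB A B u \<in> \<sigma> \<and> uBC B C u \<in> \<tau>}"

end

(*
  Let t be played by the composite: interactions u and u' of sigma and tau restrict on A, C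
  to s and s;t. Cut u' = p;v at the shortest p restricting to s, so that v restricts to t.
  Every interaction ends with a Player move of A*(x)C, and p ends with the same move as u;
  hence p leaves both sigma and tau at even positions. Walking backwards through v, each
  B-move is an Opponent move for sigma or for tau, and that strategy is winning on the rest
  of v, whose A- resp. C-payoff vanishes because that of t does; this forces both B-payoffs
  of the rest to vanish. The winning conditions of sigma and tau on all of v then give the
  missing A- and C-payoffs of t.
*)

theory Submission
  imports Defs
begin

lemma is_chain_Cons_iff:
  "is_chain G (m # s) \<longleftrightarrow> (s \<noteq> [] \<longrightarrow> tgt G m = src G (hd s)) \<and> is_chain G s"
  by (cases s) auto

lemma is_path_appendD2: "is_path G (s @ t) \<Longrightarrow> is_path G t"
  unfolding is_path_def by (induction s) (auto simp: is_chain_Cons_iff)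

lemma payoff_game_pol:
  "payoff_game G \<Longrightarrow> m \<in> mv G \<Longrightarrow> pol G m = -1 \<or> pol G m = 1"
  by (auto simp: payoff_game_def conway_game_def)

lemma payoff_game_suffix_le:
  assumes "payoff_game G" "is_path G (s @ t)"
  shows "payp G t \<le> payp G (s @ t)" and "paym G t \<le> paym G (s @ t)"
  using assms unfolding payoff_game_def by blast+

lemma payoff_game_Nil: "payoff_game G \<Longrightarrow> payp G [] = 0 \<and> paym G [] = 0"
  by (simp add: payoff_game_def)

lemma payp_Cons_Opponent_le:
  assumes "payoff_game G" "is_path G (m # s)" "pol G m = -1"
  shows "payp G (m # s) \<le> payp G s"
proof -
  have "payp G ([m] @ s) \<le> payp G [m] + payp G s"
    using assms(1,2) unfolding payoff_game_def by (metis append_Cons append_Nil)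
  moreover have "payp G [m] = 0"
    using assms unfolding payoff_game_def is_path_def by simp
  ultimately show ?thesis by simp
qed

lemma paym_Cons_Player_le:
  assumes "payoff_game G" "is_path G (m # s)" "pol G m = 1"
  shows "paym G (m # s) \<le> paym G s"
proof -
  have "paym G ([m] @ s) \<le> paym G [m] + paym G s"
    using assms(1,2) unfolding payoff_game_def by (metis append_Cons append_Nil)
  moreover have "paym G [m] = 0"
    using assms unfolding payoff_game_def is_path_def by simp
  ultimately show ?thesis by simp
qed

lemma dual_simps:
  "mv (dual G) = mv G" "src (dual G) = src G" "tgt (dual G) = tgt G" "root (dual G) = root G"
  "pol (dual G) m = - pol G m" "payp (dual G) = paym G" "paym (dual G) = payp G"
  by (simp_all add: dual_def)

lemma is_path_dual [simp]: "is_path (dual G) s \<longleftrightarrow> is_path G s"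
proof -
  have "is_chain (dual G) s \<longleftrightarrow> is_chain G s"
    by (induction s rule: is_chain.induct) (simp_all add: dual_simps)
  then show ?thesis by (simp add: is_path_def dual_simps)
qed

lemma tensor_simps:
  "mv (tensor G H) =
     {Inl (m, y) | m y. m \<in> mv G \<and> y \<in> pos H} \<union> {Inr (x, n) | x n. x \<in> pos G \<and> n \<in> mv H}"
  "src (tensor G H) (Inl (m, y)) = (src G m, y)"
  "src (tensor G H) (Inr (x, n)) = (x, src H n)"
  "tgt (tensor G H) (Inl (m, y)) = (tgt G m, y)"
  "tgt (tensor G H) (Inr (x, n)) = (x, tgt H n)"
  "pol (tensor G H) (Inl (m, y)) = pol G m"
  "pol (tensor G H) (Inr (x, n)) = pol H n"
  "payp (tensor G H) s = payp G (projL s) + payp H (projR s)"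
  "paym (tensor G H) s = paym G (projL s) + paym H (projR s)"
  by (simp_all add: tensor_def)

lemma is_path_tensorD:
  assumes "is_path (tensor G H) s"
  shows "is_path G (projL s) \<and> is_path H (projR s)"
proof -
  have moves:
    "set s \<subseteq> mv (tensor G H) \<Longrightarrow> set (projL s) \<subseteq> mv G \<and> set (projR s) \<subseteq> mv H"
    by (induction s rule: projL.induct) (auto simp: tensor_simps)
  have "is_chain (tensor G H) s \<Longrightarrow>
      is_chain G (projL s) \<and> (projL s \<noteq> [] \<longrightarrow> src G (hd (projL s)) = fst (src (tensor G H) (hd s)))
    \<and> is_chain H (projR s) \<and> (projR s \<noteq> [] \<longrightarrow> src H (hd (projR s)) = snd (src (tensor G H) (hd s)))"
  proof (induction s)
    case (Cons e s)
    have "s \<noteq> [] \<Longrightarrow> src (tensor G H) (hd s) = tgt (tensor G H) e"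
      using Cons.prems by (simp add: is_chain_Cons_iff)
    moreover have "projL s \<noteq> [] \<Longrightarrow> s \<noteq> []" "projR s \<noteq> [] \<Longrightarrow> s \<noteq> []" by auto
    ultimately show ?case using Cons
      by (cases e) (auto simp: tensor_simps is_chain_Cons_iff)
  qed simp
  then show ?thesis using assms moves unfolding is_path_def by blast
qed

definition lefts :: "('a + 'b) list \<Rightarrow> 'a list" where
  "lefts xs = [a. Inl a \<leftarrow> xs]"

definition rights :: "('a + 'b) list \<Rightarrow> 'b list" where
  "rights xs = [b. Inr b \<leftarrow> xs]"

lemma lefts_simps [simp]:
  "lefts [] = []" "lefts (Inl a # xs) = a # lefts xs" "lefts (Inr b # xs) = lefts xs"
  "lefts (xs @ ys) = lefts xs @ lefts ys"
  by (simp_all add: lefts_def)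

lemma rights_simps [simp]:
  "rights [] = []" "rights (Inl a # xs) = rights xs" "rights (Inr b # xs) = b # rights xs"
  "rights (xs @ ys) = rights xs @ rights ys"
  by (simp_all add: rights_def)

lemma length_lefts_rights: "length xs = length (lefts xs) + length (rights xs)"
proof (induction xs)
  case (Cons e xs)
  then show ?case by (cases e) simp_all
qed simp

fun move_of :: "('ma \<times> 'vb) + ('va \<times> 'mb) \<Rightarrow> 'ma + 'mb" where
  "move_of (Inl (m, y)) = Inl m"
| "move_of (Inr (x, n)) = Inr n"

lemma map_move_of_lift [simp]: "map move_of (lift ta tb x y xs) = xs"
  by (induction ta tb x y xs rule: lift.induct) auto

lemma length_lift [simp]: "length (lift ta tb x y xs) = length xs"
  by (induction ta tb x y xs rule: lift.induct) auto

lemma projL_eq_lefts: "projL s = lefts (map move_of s)"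
  by (induction s rule: projL.induct) auto

lemma projR_eq_rights: "projR s = rights (map move_of s)"
  by (induction s rule: projL.induct) auto

lemma lift_append: "\<exists>x' y'. lift ta tb x y (xs @ ys) = lift ta tb x y xs @ lift ta tb x' y' ys"
  by (induction ta tb x y xs rule: lift.induct) auto

lemma pol_tensor: "pol (tensor G H) e = case_sum (pol G) (pol H) (move_of e)"
  by (cases e rule: move_of.cases) (simp_all add: tensor_simps)

lemma strategy_memD:
  assumes "strategy G \<sigma>" "s \<in> \<sigma>"
  shows "is_path G s" "alternating G s" "even (length s)" "s \<noteq> [] \<Longrightarrow> pol G (hd s) = -1"
  using assms unfolding strategy_def is_play_def by simp_all

lemma strategy_even_prefix:
  assumes "strategy G \<sigma>" "s @ r \<in> \<sigma>" "even (length s)"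
  shows "s \<in> \<sigma>"
  using assms(2)
proof (induction "length r" arbitrary: r rule: less_induct)
  case less
  show ?case
  proof (cases r rule: rev_cases)
    case (snoc r' n)
    have "even (length (s @ r))" using strategy_memD(3)[OF assms(1) less.prems] .
    then obtain r'' m where "r' = r'' @ [m]"
      using assms(3) snoc by (cases r' rule: rev_cases) auto
    moreover have "(s @ r'') @ [m, n] \<in> \<sigma> \<Longrightarrow> s @ r'' \<in> \<sigma>"
      using assms(1) unfolding strategy_def by blast
    ultimately show ?thesis using less.hyps[of r''] less.prems snoc by simp
  qed (use less in simp)
qed

lemma strategy_pol_nth:
  assumes "strategy G \<sigma>" "s \<in> \<sigma>" "i < length s"
  shows "pol G (s ! i) = (if even i then -1 else 1)"
  using assms(3)
proof (induction i)
  case 0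
  then show ?case using strategy_memD(4)[OF assms(1,2)] by (auto simp: hd_conv_nth)
next
  case (Suc i)
  then show ?case using strategy_memD(2)[OF assms(1,2)] unfolding alternating_def by auto
qed

lemma strategy_pol_lift:
  assumes "strategy (tensor G H) \<sigma>" "lift ta tb x y (xs @ z # ys) \<in> \<sigma>"
  shows "case_sum (pol G) (pol H) z = (if even (length xs) then -1 else 1)"
proof -
  let ?s = "lift ta tb x y (xs @ z # ys)"
  have "move_of (?s ! length xs) = z"
    using nth_map[of "length xs" ?s move_of] by simp
  then show ?thesis using strategy_pol_nth[OF assms, of "length xs"] by (simp add: pol_tensor)
qed

lemma winning_tensor_lift_suffix:
  assumes "strategy (tensor (dual G) H) \<sigma>" "winning (tensor (dual G) H) \<sigma>"
    and "lift ta tb x y (xs @ ys) \<in> \<sigma>" "even (length xs)"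
    and "paym G (lefts ys) = 0" "payp H (rights ys) = 0"
  shows "payp G (lefts ys) = 0 \<and> paym H (rights ys) = 0"
proof -
  obtain x' y' where split: "lift ta tb x y (xs @ ys) = lift ta tb x y xs @ lift ta tb x' y' ys"
    using lift_append[of ta tb x y xs ys] by blast
  then have "lift ta tb x y xs \<in> \<sigma>"
    using strategy_even_prefix[OF assms(1)] assms(3,4) by simp
  then have "plays \<sigma> (lift ta tb x' y' ys)"
    using assms(3) split unfolding plays_def by auto
  then have "payp (tensor (dual G) H) (lift ta tb x' y' ys) = 0
      \<longrightarrow> paym (tensor (dual G) H) (lift ta tb x' y' ys) = 0"
    using assms(2) unfolding winning_def by blast
  then show ?thesis
    using assms(5,6) by (simp add: tensor_simps dual_simps projL_eq_lefts projR_eq_rights)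
qed

definition movesA :: "('ma + 'mb + 'mc) list \<Rightarrow> 'ma list" where
  "movesA u = [a. Inl a \<leftarrow> u]"

definition movesB :: "('ma + 'mb + 'mc) list \<Rightarrow> 'mb list" where
  "movesB u = [b. Inr (Inl b) \<leftarrow> u]"

definition movesC :: "('ma + 'mb + 'mc) list \<Rightarrow> 'mc list" where
  "movesC u = [c. Inr (Inr c) \<leftarrow> u]"

fun is_B_move :: "'ma + 'mb + 'mc \<Rightarrow> bool" where
  "is_B_move (Inr (Inl b)) = True"
| "is_B_move _ = False"

lemma restr_simps [simp]:
  "restrAB [] = []" "restrBC [] = []" "restrAC [] = []"
  "restrAB (Inl a # u) = Inl a # restrAB u"
  "restrAB (Inr (Inl b) # u) = Inr b # restrAB u"
  "restrAB (Inr (Inr c) # u) = restrAB u"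
  "restrBC (Inl a # u) = restrBC u"
  "restrBC (Inr (Inl b) # u) = Inl b # restrBC u"
  "restrBC (Inr (Inr c) # u) = Inr c # restrBC u"
  "restrAC (Inl a # u) = Inl a # restrAC u"
  "restrAC (Inr (Inl b) # u) = restrAC u"
  "restrAC (Inr (Inr c) # u) = Inr c # restrAC u"
  "restrAB (u @ v) = restrAB u @ restrAB v"
  "restrBC (u @ v) = restrBC u @ restrBC v"
  "restrAC (u @ v) = restrAC u @ restrAC v"
  by (simp_all add: restrAB_def restrBC_def restrAC_def)

lemma moves_simps [simp]:
  "movesA [] = []" "movesB [] = []" "movesC [] = []"
  "movesA (Inl a # u) = a # movesA u" "movesA (Inr x # u) = movesA u"
  "movesB (Inl a # u) = movesB u" "movesB (Inr (Inl b) # u) = b # movesB u"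
  "movesB (Inr (Inr c) # u) = movesB u"
  "movesC (Inl a # u) = movesC u" "movesC (Inr (Inl b) # u) = movesC u"
  "movesC (Inr (Inr c) # u) = c # movesC u"
  "movesA (u @ v) = movesA u @ movesA v"
  "movesB (u @ v) = movesB u @ movesB v"
  "movesC (u @ v) = movesC u @ movesC v"
  by (simp_all add: movesA_def movesB_def movesC_def)

lemma lefts_rights_restr [simp]:
  "lefts (restrAB u) = movesA u" "rights (restrAB u) = movesB u"
  "lefts (restrBC u) = movesB u" "rights (restrBC u) = movesC u"
  "lefts (restrAC u) = movesA u" "rights (restrAC u) = movesC u"
  by (induction u) (auto simp: lefts_def rights_def restrAB_def restrBC_def restrAC_def
      movesA_def movesB_def movesC_def split: sum.splits)

lemma length_restrAB_restrBC:
  "length (restrAB u) + length (restrBC u) = length (restrAC u) + 2 * length (movesB u)"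
  using length_lefts_rights[of "restrAB u"] length_lefts_rights[of "restrBC u"]
    length_lefts_rights[of "restrAC u"] by simp

lemma restrAC_eq_append_split:
  "restrAC u = S @ T \<Longrightarrow>
    \<exists>p v. u = p @ v \<and> restrAC p = S \<and> restrAC v = T
      \<and> (p \<noteq> [] \<longrightarrow> \<not> is_B_move (last p))"
proof (induction u arbitrary: S)
  case (Cons e u)
  show ?case
  proof (cases "S = []")
    case True
    then have "e # u = [] @ (e # u) \<and> restrAC [] = S \<and> restrAC (e # u) = T"
      using Cons.prems by simp
    then show ?thesis by blast
  next
    case False
    show ?thesis
    proof (cases "is_B_move e")
      case True
      then have "restrAC u = S @ T" using Cons.prems by (cases e rule: is_B_move.cases) simp_all
      then obtain p v where pv: "u = p @ v" "restrAC p = S" "restrAC v = T"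
        "p \<noteq> [] \<longrightarrow> \<not> is_B_move (last p)"
        using Cons.IH by blast
      moreover have "p \<noteq> []" using pv(2) \<open>S \<noteq> []\<close> by auto
      ultimately have "e # u = (e # p) @ v \<and> restrAC (e # p) = S \<and> restrAC v = T
          \<and> \<not> is_B_move (last (e # p))"
        using True by (cases e rule: is_B_move.cases) simp_all
      then show ?thesis by blast
    next
      case False
      then obtain y where y: "restrAC (e # u) = y # restrAC u" "restrAC [e] = [y]"
        by (cases e rule: is_B_move.cases) simp_all
      then obtain S' where "S = y # S'" "restrAC u = S' @ T"
        using Cons.prems \<open>S \<noteq> []\<close> by (cases S) auto
      then obtain p v where "u = p @ v" "restrAC p = S'" "restrAC v = T"
        "p \<noteq> [] \<longrightarrow> \<not> is_B_move (last p)"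
        using Cons.IH by blast
      then have "e # u = (e # p) @ v \<and> restrAC (e # p) = S \<and> restrAC v = T
          \<and> \<not> is_B_move (last (e # p))"
        using False y \<open>S = y # S'\<close> by (cases e rule: is_B_move.cases) simp_all
      then show ?thesis by blast
    qed
  qed
qed simp

locale composition =
  fixes A :: "('va, 'ma) pgame" and B :: "('vb, 'mb) pgame" and C :: "('vc, 'mc) pgame"
    and \<sigma> :: "(('ma \<times> 'vb) + ('va \<times> 'mb)) list set"
    and \<tau> :: "(('mb \<times> 'vc) + ('vb \<times> 'mc)) list set"
  assumes payoff_A: "payoff_game A" and payoff_B: "payoff_game B" and payoff_C: "payoff_game C"
    and strategy_\<sigma>: "strategy (tensor (dual A) B) \<sigma>" and winning_\<sigma>: "winning (tensor (dual A) B) \<sigma>"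
    and strategy_\<tau>: "strategy (tensor (dual B) C) \<tau>" and winning_\<tau>: "winning (tensor (dual B) C) \<tau>"
begin

abbreviation liftAB :: "('ma + 'mb) list \<Rightarrow> (('ma \<times> 'vb) + ('va \<times> 'mb)) list" where
  "liftAB \<equiv> lift (tgt A) (tgt B) (root A) (root B)"

abbreviation liftBC :: "('mb + 'mc) list \<Rightarrow> (('mb \<times> 'vc) + ('vb \<times> 'mc)) list" where
  "liftBC \<equiv> lift (tgt B) (tgt C) (root B) (root C)"

definition in_parallel :: "('ma + 'mb + 'mc) list \<Rightarrow> bool" where
  "in_parallel u \<longleftrightarrow> uAB A B u \<in> \<sigma> \<and> uBC B C u \<in> \<tau>"

lemma in_parallel_even:
  "in_parallel u \<Longrightarrow> even (length (restrAB u)) \<and> even (length (restrBC u))"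
  using strategy_memD(3)[OF strategy_\<sigma>, of "uAB A B u"]
    strategy_memD(3)[OF strategy_\<tau>, of "uBC B C u"]
  by (simp add: in_parallel_def uAB_def uBC_def)

lemma in_parallel_paths:
  assumes "in_parallel u"
  shows "is_path A (movesA u)" "is_path B (movesB u)" "is_path C (movesC u)"
proof -
  have "is_path (tensor (dual A) B) (uAB A B u)" "is_path (tensor (dual B) C) (uBC B C u)"
    using assms strategy_memD(1)[OF strategy_\<sigma>] strategy_memD(1)[OF strategy_\<tau>]
    unfolding in_parallel_def by simp_all
  then show "is_path A (movesA u)" "is_path B (movesB u)" "is_path C (movesC u)"
    by (auto dest!: is_path_tensorD simp: uAB_def uBC_def projL_eq_lefts projR_eq_rights)
qed

lemma in_parallel_pol:
  assumes "in_parallel (q @ e # w)"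
  shows "e = Inl a \<Longrightarrow> pol A a = (if even (length (restrAB q)) then 1 else -1)"
    and "e = Inr (Inl b) \<Longrightarrow> pol B b = (if even (length (restrAB q)) then -1 else 1)"
    and "e = Inr (Inl b) \<Longrightarrow> pol B b = (if even (length (restrBC q)) then 1 else -1)"
    and "e = Inr (Inr c) \<Longrightarrow> pol C c = (if even (length (restrBC q)) then -1 else 1)"
proof -
  have AB: "liftAB (restrAB q @ restrAB (e # w)) \<in> \<sigma>"
    and BC: "liftBC (restrBC q @ restrBC (e # w)) \<in> \<tau>"
    using assms by (simp_all add: in_parallel_def uAB_def uBC_def)
  show "pol A a = (if even (length (restrAB q)) then 1 else -1)" if "e = Inl a"
    using strategy_pol_lift[OF strategy_\<sigma> AB[unfolded that restr_simps]]
    by (auto simp: dual_simps split: if_splits)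
  show "pol B b = (if even (length (restrAB q)) then -1 else 1)" if "e = Inr (Inl b)"
    using strategy_pol_lift[OF strategy_\<sigma> AB[unfolded that restr_simps]] by simp
  show "pol B b = (if even (length (restrBC q)) then 1 else -1)" if "e = Inr (Inl b)"
    using strategy_pol_lift[OF strategy_\<tau> BC[unfolded that restr_simps]]
    by (auto simp: dual_simps split: if_splits)
  show "pol C c = (if even (length (restrBC q)) then -1 else 1)" if "e = Inr (Inr c)"
    using strategy_pol_lift[OF strategy_\<tau> BC[unfolded that restr_simps]] by simp
qed

lemma in_parallel_last_move:
  assumes "in_parallel (q @ [e])"
  shows "\<not> is_B_move e" and "e = Inl a \<Longrightarrow> pol A a = -1" and "e = Inr (Inr c) \<Longrightarrow> pol C c = 1"
proof -
  have even: "even (length (restrAB (q @ [e])))" "even (length (restrBC (q @ [e])))"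
    using in_parallel_even[OF assms] by simp_all
  show "\<not> is_B_move e"
  proof
    assume "is_B_move e"
    then obtain b where "e = Inr (Inl b)" by (cases e rule: is_B_move.cases) simp_all
    then show False using even in_parallel_pol(2,3)[OF assms] by simp
  qed
  show "pol A a = -1" if "e = Inl a" using even in_parallel_pol(1)[OF assms that] that by simp
  show "pol C c = 1" if "e = Inr (Inr c)" using even in_parallel_pol(4)[OF assms that] that by simp
qed

lemma \<sigma>_winning_suffix:
  assumes "in_parallel (q @ w)" "even (length (restrAB q))"
    and "paym A (movesA w) = 0" "payp B (movesB w) = 0"
  shows "payp A (movesA w) = 0 \<and> paym B (movesB w) = 0"
  using winning_tensor_lift_suffix[OF strategy_\<sigma> winning_\<sigma>,
      of "tgt A" "tgt B" "root A" "root B" "restrAB q" "restrAB w"] assms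
  by (simp add: in_parallel_def uAB_def)

lemma \<tau>_winning_suffix:
  assumes "in_parallel (q @ w)" "even (length (restrBC q))"
    and "paym B (movesB w) = 0" "payp C (movesC w) = 0"
  shows "payp B (movesB w) = 0 \<and> paym C (movesC w) = 0"
  using winning_tensor_lift_suffix[OF strategy_\<tau> winning_\<tau>,
      of "tgt B" "tgt C" "root B" "root C" "restrBC q" "restrBC w"] assms
  by (simp add: in_parallel_def uBC_def)

lemma in_parallel_payoff_suffix_le:
  assumes "in_parallel (q @ v @ w)"
  shows "paym A (movesA w) \<le> paym A (movesA (v @ w))"
    and "payp C (movesC w) \<le> payp C (movesC (v @ w))"
proof -
  have "is_path A (movesA v @ movesA w)" "is_path C (movesC v @ movesC w)"
    using in_parallel_paths(1,3)[OF assms] is_path_appendD2 by fastforce+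
  then show "paym A (movesA w) \<le> paym A (movesA (v @ w))"
      and "payp C (movesC w) \<le> payp C (movesC (v @ w))"
    using payoff_game_suffix_le[OF payoff_A] payoff_game_suffix_le[OF payoff_C] by simp_all
qed

lemma in_parallel_B_payoff_zero:
  assumes "in_parallel (q @ w)" "paym A (movesA w) = 0" "payp C (movesC w) = 0"
  shows "payp B (movesB w) = 0 \<and> paym B (movesB w) = 0"
  using assms
proof (induction w arbitrary: q)
  case Nil
  then show ?case using payoff_game_Nil[OF payoff_B] by simp
next
  case (Cons e w)
  have "paym A (movesA w) = 0" "payp C (movesC w) = 0"
    using in_parallel_payoff_suffix_le[of q "[e]" w] Cons.prems by simp_all
  then have IH: "payp B (movesB w) = 0 \<and> paym B (movesB w) = 0"
    using Cons.IH[of "q @ [e]"] Cons.prems(1) by simp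
  show ?case
  proof (cases "is_B_move e")
    case False
    then show ?thesis using IH by (cases e rule: is_B_move.cases) simp_all
  next
    case True
    then obtain m where e: "e = Inr (Inl m)" by (cases e rule: is_B_move.cases) simp_all
    have path_m: "is_path B (m # movesB w)"
      using in_parallel_paths(2)[OF Cons.prems(1)] is_path_appendD2 e by fastforce
    then have "pol B m = -1 \<or> pol B m = 1"
      using payoff_game_pol[OF payoff_B] by (simp add: is_path_def)
    then show ?thesis
    proof
      assume O: "pol B m = -1"
      then have "payp B (movesB (e # w)) = 0"
        using payp_Cons_Opponent_le[OF payoff_B path_m] IH e by simp
      moreover have "even (length (restrAB q))"
        using in_parallel_pol(2)[OF Cons.prems(1) e] O by (simp split: if_splits)
      ultimately show ?thesis using \<sigma>_winning_suffix[OF Cons.prems(1)] Cons.prems(2) by simp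
    next
      assume P: "pol B m = 1"
      then have "paym B (movesB (e # w)) = 0"
        using paym_Cons_Player_le[OF payoff_B path_m] IH e by simp
      moreover have "even (length (restrBC q))"
        using in_parallel_pol(3)[OF Cons.prems(1) e] P by (simp split: if_splits)
      ultimately show ?thesis using \<tau>_winning_suffix[OF Cons.prems(1)] Cons.prems(3) by simp
    qed
  qed
qed

lemma in_parallel_prefix_even:
  assumes "in_parallel u" "in_parallel (p @ v)" "restrAC p = restrAC u"
    and "p \<noteq> [] \<longrightarrow> \<not> is_B_move (last p)"
  shows "even (length (restrAB p)) \<and> even (length (restrBC p))"
proof (cases p rule: rev_cases)
  case (snoc p' e)
  have e: "\<not> is_B_move e" using assms(4) snoc by simp
  then consider (A) a where "e = Inl a" | (C) c where "e = Inr (Inr c)"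
    by (cases e rule: is_B_move.cases) auto
  note cases_e = this
  then have "restrAC p \<noteq> []" using snoc by cases simp_all
  then obtain q e' where u: "u = q @ [e']" using assms(3) by (cases u rule: rev_cases) auto
  have "\<not> is_B_move e'" using in_parallel_last_move(1) assms(1) u by simp
  then have "e' = e"
    using assms(3) snoc u e by (cases e' rule: is_B_move.cases; cases e rule: is_B_move.cases) simp_all
  have "even (length (restrAB p) + length (restrBC p))"
    using length_restrAB_restrBC[of p] length_restrAB_restrBC[of u]
      in_parallel_even[OF assms(1)] assms(3) by presburger
  moreover have False if "odd (length (restrAB p))" "odd (length (restrBC p))"
    using cases_e
  proof cases
    case (A a)
    have "pol A a = -1" using in_parallel_last_move(2) assms(1) u \<open>e' = e\<close> A by simp
    moreover have "pol A a = 1" using in_parallel_pol(1)[of p' e v] assms(2) snoc A that by simp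
    ultimately show False by simp
  next
    case (C c)
    have "pol C c = 1" using in_parallel_last_move(3) assms(1) u \<open>e' = e\<close> C by simp
    moreover have "pol C c = -1" using in_parallel_pol(4)[of p' e v] assms(2) snoc C that by simp
    ultimately show False by simp
  qed
  ultimately show ?thesis by auto
qed simp

end

theorem mainTheorem2:
  fixes A :: "('va, 'ma) pgame" and B :: "('vb, 'mb) pgame" and C :: "('vc, 'mc) pgame"
    and \<sigma> :: "(('ma \<times> 'vb) + ('va \<times> 'mb)) list set"
    and \<tau> :: "(('mb \<times> 'vc) + ('vb \<times> 'mc)) list set"
  assumes "payoff_game A" and "payoff_game B" and "payoff_game C"
    and "strategy (tensor (dual A) B) \<sigma>" and "winning (tensor (dual A) B) \<sigma>"
    and "strategy (tensor (dual B) C) \<tau>" and "winning (tensor (dual B) C) \<tau>"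
  shows "winning (tensor (dual A) C) (comp A B C \<sigma> \<tau>)"
proof -
  interpret composition A B C \<sigma> \<tau> using assms by unfold_locales
  show ?thesis unfolding winning_def
  proof (intro allI impI)
    fix t
    assume "plays (comp A B C \<sigma> \<tau>) t" and t_payp: "payp (tensor (dual A) C) t = 0"
    then obtain u u' where u: "in_parallel u" "in_parallel u'" "uAC A C u @ t = uAC A C u'"
      unfolding plays_def comp_def in_parallel_def by blast
    then have "restrAC u' = restrAC u @ map move_of t"
      unfolding uAC_def by (metis map_append map_move_of_lift)
    then obtain p v where split: "u' = p @ v" "restrAC p = restrAC u" "restrAC v = map move_of t"
        "p \<noteq> [] \<longrightarrow> \<not> is_B_move (last p)"
      using restrAC_eq_append_split by blast
    have t_payoffs: "payp (tensor (dual A) C) t = paym A (movesA v) + payp C (movesC v)"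
        "paym (tensor (dual A) C) t = payp A (movesA v) + paym C (movesC v)"
      by (simp_all add: tensor_simps dual_simps projL_eq_lefts projR_eq_rights split(3)[symmetric])
    have uv: "in_parallel (p @ v)" using u(2) split(1) by simp
    have A_C: "paym A (movesA v) = 0" "payp C (movesC v) = 0" using t_payp t_payoffs(1) by simp_all
    have B: "payp B (movesB v) = 0 \<and> paym B (movesB v) = 0"
      using in_parallel_B_payoff_zero[OF uv A_C] .
    have "even (length (restrAB p)) \<and> even (length (restrBC p))"
      using in_parallel_prefix_even[OF u(1) uv split(2)] split(4) by blast
    then have "payp A (movesA v) = 0" "paym C (movesC v) = 0"
      using \<sigma>_winning_suffix[OF uv] \<tau>_winning_suffix[OF uv] A_C B by simp_all
    then show "paym (tensor (dual A) C) t = 0" using t_payoffs(2) by simp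
  qed
qed

end
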